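(* Let $d\ge 1$, let $f=(f_1,\dots,f_d):\mathbb{R}^d\to\mathbb{R}^d$ be smooth, and let $\phi:\mathbb{R}^d\to\mathbb{R}$ be smooth. Let $\gamma_1$ and $\gamma_2$ be two exotic aromatic rooted forests, with node sets $V_1$ (root $r_1$, non-root nodes $V_1^0=V_1\setminus\{r_1\}$) and $V_2$ (root $r_2$, non-root nodes $V_2^0=V_2\setminus\{r_2\}$). For maps $\varphi:\pi(r_2)\to V_1$ and $\psi:\Gamma(r_2)\to V_1$, let $\gamma_{\varphi,\psi}$ be the exotic aromatic rooted forest obtained as follows: its nodes are $V_1\cup V_2^0$ (disjoint union) with root $r_1$; it contains all edges and lianas of $\gamma_1$, all edges and lianas of $\gamma_2$ not incident to $r_2$; each edge $w\to r_2$ of $\gamma_2$ (with $w\in\pi(r_2)$) is replaced by the edge $w\to\varphi(w)$; and each liana end of $\gamma_2$ located at $r_2$ (an element $e\in\Gamma(r_2)$) is moved to the node $\psi(e)\in V_1$. Then $$F(\gamma_2)\big(F(\gamma_1)(\phi)\big)=\sum_{\varphi:\pi(r_2)\to V_1}\ \sum_{\psi:\Gamma(r_2)\to V_1} F(\gamma_{\varphi,\psi})(\phi),$$ where the sums run over all maps $\varphi$ and $\psi$.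
   Context: An exotic aromatic rooted forest $\gamma$ consists of a finite set of nodes $V$ with a distinguished node $r$ (the root), write $V^0=V\setminus\{r\}$; a set of directed edges such that every node of $V^0$ has exactly one outgoing edge and the root has none (cycles, i.e. aromas, are allowed); and a finite set of lianas, each liana being an undirected edge with two ends, each end attached to a node (both ends may be attached to the same node). For a node $v$, $\pi(v)$ denotes the set of nodes $w$ having an edge $w\to v$ (predecessors of $v$), and $\Gamma(v)$ denotes the set of liana ends attached to $v$ (so lianas are counted with multiplicity: a liana with both ends at $v$ contributes two elements of $\Gamma(v)$). Each non-root node $v$ carries an index $i_v\in\{1,\dots,d\}$ and each liana $l$ carries an index $j_l\in\{1,\dots,d\}$; for a liana end $e$ belonging to liana $l$ write $j_e=j_l$. Set $\partial_{I_{\pi(v)}}=\prod_{w\in\pi(v)}\partial_{i_w}$ and $\partial_{J_{\Gamma(v)}}=\prod_{e\in\Gamma(v)}\partial_{j_e}$, where $\partial_i=\partial/\partial x_i$. The elementary differential of $\gamma$ is the linear differential operator acting on smooth $\phi:\mathbb{R}^d\to\mathbb{R}$ by $$F(\gamma)(\phi)=\sum_{(i_v)_{v\in V^0}}\ \sum_{(j_l)_{l \text{ liana}}}\Big(\prod_{v\in V^0}\partial_{I_{\pi(v)}}\partial_{J_{\Gamma(v)}} f_{i_v}\Big)\,\partial_{I_{\pi(r)}}\partial_{J_{\Gamma(r)}}\phi,$$ all indices ranging over $\{1,\dots,d\}$. *)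

theory Defs
  imports "HOL-Analysis.Analysis" "HOL-Library.FuncSet" "HOL-Library.Multiset"
begin

definition partial :: "'n::finite \<Rightarrow> (real^'n \<Rightarrow> real) \<Rightarrow> (real^'n \<Rightarrow> real)" where
  "partial i g = (\<lambda>x. deriv (\<lambda>t. g (x + t *\<^sub>R axis i 1)) 0)"

fun pderivs :: "'n::finite list \<Rightarrow> (real^'n \<Rightarrow> real) \<Rightarrow> (real^'n \<Rightarrow> real)" where
  "pderivs [] g = g"
| "pderivs (i # is) g = partial i (pderivs is g)"

text \<open>Product of partial derivatives indexed by a multiset of coordinates
  (applied in an arbitrary order; for smooth functions the order is irrelevant).\<close>
definition pderivs_mset :: "'n::finite multiset \<Rightarrow> (real^'n \<Rightarrow> real) \<Rightarrow> (real^'n \<Rightarrow> real)" where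
  "pderivs_mset M g = pderivs (SOME xs. mset xs = M) g"

definition smooth :: "(real^'n::finite \<Rightarrow> real) \<Rightarrow> bool" where
  "smooth g \<longleftrightarrow> (\<forall>is. continuous_on UNIV (pderivs is g) \<and>
     (\<forall>i x. (\<lambda>t. pderivs is g (x + t *\<^sub>R axis i 1)) differentiable (at 0)))"

text \<open>Each liana l has two ends (l,True), (l,False);
  att maps a liana end to the node it is attached to. succ v is the target of the
  unique outgoing edge of a non-root node v (the value at the root is irrelevant).\<close>
record ('v, 'l) eaf =
  nodes :: "'v set"
  root :: 'v
  succ :: "'v \<Rightarrow> 'v"
  lianas :: "'l set"
  att :: "'l \<times> bool \<Rightarrow> 'v"

definition wf_eaf :: "('v, 'l) eaf \<Rightarrow> bool" where
  "wf_eaf \<gamma> \<longleftrightarrow> finite (nodes \<gamma>) \<and> root \<gamma> \<in> nodes \<gamma> \<and>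
     (\<forall>v \<in> nodes \<gamma> - {root \<gamma>}. succ \<gamma> v \<in> nodes \<gamma>) \<and>
     finite (lianas \<gamma>) \<and> (\<forall>e \<in> lianas \<gamma> \<times> UNIV. att \<gamma> e \<in> nodes \<gamma>)"

definition nonroot :: "('v, 'l) eaf \<Rightarrow> 'v set" where
  "nonroot \<gamma> = nodes \<gamma> - {root \<gamma>}"

definition liana_ends :: "('v, 'l) eaf \<Rightarrow> ('l \<times> bool) set" where
  "liana_ends \<gamma> = lianas \<gamma> \<times> UNIV"

definition preds :: "('v, 'l) eaf \<Rightarrow> 'v \<Rightarrow> 'v set" where
  "preds \<gamma> v = {w \<in> nonroot \<gamma>. succ \<gamma> w = v}"

definition ends_at :: "('v, 'l) eaf \<Rightarrow> 'v \<Rightarrow> ('l \<times> bool) set" where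
  "ends_at \<gamma> v = {e \<in> liana_ends \<gamma>. att \<gamma> e = v}"

definition deriv_idx :: "('v, 'l) eaf \<Rightarrow> ('v \<Rightarrow> 'n) \<Rightarrow> ('l \<Rightarrow> 'n) \<Rightarrow> 'v \<Rightarrow> 'n multiset" where
  "deriv_idx \<gamma> I J v = image_mset I (mset_set (preds \<gamma> v))
                       + image_mset (\<lambda>e. J (fst e)) (mset_set (ends_at \<gamma> v))"

definition elem_diff :: "(real^'n::finite \<Rightarrow> real^'n) \<Rightarrow> ('v, 'l) eaf
     \<Rightarrow> (real^'n \<Rightarrow> real) \<Rightarrow> (real^'n \<Rightarrow> real)" where
  "elem_diff f \<gamma> \<phi> = (\<lambda>x.
     \<Sum>I \<in> nonroot \<gamma> \<rightarrow>\<^sub>E (UNIV :: 'n set).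
     \<Sum>J \<in> lianas \<gamma> \<rightarrow>\<^sub>E (UNIV :: 'n set).
       (\<Prod>v \<in> nonroot \<gamma>. pderivs_mset (deriv_idx \<gamma> I J v) (\<lambda>y. f y $ I v) x)
       * pderivs_mset (deriv_idx \<gamma> I J (root \<gamma>)) \<phi> x)"

definition graft :: "('v, 'l1) eaf \<Rightarrow> ('w, 'l2) eaf \<Rightarrow> ('w \<Rightarrow> 'v) \<Rightarrow> ('l2 \<times> bool \<Rightarrow> 'v)
     \<Rightarrow> ('v + 'w, 'l1 + 'l2) eaf" where
  "graft \<gamma>1 \<gamma>2 \<phi> \<psi> =
     \<lparr> nodes = Inl ` nodes \<gamma>1 \<union> Inr ` nonroot \<gamma>2,
       root = Inl (root \<gamma>1),
       succ = (\<lambda>u. case u of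
                 Inl v \<Rightarrow> Inl (succ \<gamma>1 v)
               | Inr w \<Rightarrow> (if succ \<gamma>2 w = root \<gamma>2 then Inl (\<phi> w) else Inr (succ \<gamma>2 w))),
       lianas = Inl ` lianas \<gamma>1 \<union> Inr ` lianas \<gamma>2,
       att = (\<lambda>(l, b). case l of
                 Inl l1 \<Rightarrow> Inl (att \<gamma>1 (l1, b))
               | Inr l2 \<Rightarrow> (if att \<gamma>2 (l2, b) = root \<gamma>2 then Inl (\<psi> (l2, b))
                           else Inr (att \<gamma>2 (l2, b)))) \<rparr>"

end

theory Submission
  imports Defs
begin

(*
  F(gamma2) applied to F(gamma1)(phi) differentiates the function F(gamma1)(phi) -- a sum of
  products over the nodes of gamma1, the root factor being a derivative of phi and every other
  factor a derivative of a component of f -- once for each edge and each liana end at the root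
  of gamma2. By the Leibniz rule every one of these derivatives falls on exactly one node of
  gamma1; recording where they fall gives maps varphi : pi(r2) -> V1 and psi : Gamma(r2) -> V1,
  and for fixed varphi, psi the resulting index multisets at the nodes of gamma1 are exactly
  those of the grafted forest gamma_{varphi,psi}, whose remaining nodes carry the factors of
  gamma2. Smoothness is needed because pderivs_mset applies the partial derivatives in an
  unspecified order: by Schwarz's theorem the order is irrelevant.
*)

section \<open>Partial derivatives along coordinate axes\<close>

definition partially_differentiable :: "(real^'n::finite \<Rightarrow> real) \<Rightarrow> 'n \<Rightarrow> bool" where
  "partially_differentiable g i \<longleftrightarrow> (\<forall>y. (\<lambda>t. g (y + t *\<^sub>R axis i 1)) differentiable (at 0))"

lemma partially_differentiable_DERIV:
  assumes "partially_differentiable g i"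
  shows "((\<lambda>t. g (y + t *\<^sub>R axis i 1)) has_real_derivative partial i g y) (at 0)"
  using assms unfolding partially_differentiable_def partial_def
  by (simp add: DERIV_deriv_iff_real_differentiable)

lemma partially_differentiable_DERIV_at:
  assumes "partially_differentiable g i"
  shows "((\<lambda>s. g (y + s *\<^sub>R axis i 1)) has_real_derivative partial i g (y + s0 *\<^sub>R axis i 1)) (at s0)"
proof -
  let ?z = "y + s0 *\<^sub>R axis i (1::real)"
  have "((\<lambda>t. g (?z + t *\<^sub>R axis i 1)) has_real_derivative partial i g ?z) (at (s0 + - s0))"
    using partially_differentiable_DERIV[OF assms] by simp
  then have "((\<lambda>s. g (?z + (s + - s0) *\<^sub>R axis i 1)) has_real_derivative partial i g ?z) (at s0)"
    by (subst (asm) DERIV_shift) simp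
  moreover have "(\<lambda>s. g (?z + (s + - s0) *\<^sub>R axis i 1)) = (\<lambda>s. g (y + s *\<^sub>R axis i 1))"
    by (simp add: algebra_simps)
  ultimately show ?thesis by simp
qed

lemma partially_differentiableI:
  "(\<And>y. ((\<lambda>t. g (y + t *\<^sub>R axis i 1)) has_real_derivative D y) (at 0)) \<Longrightarrow> partially_differentiable g i"
  unfolding partially_differentiable_def using real_differentiable_def by blast

lemma partial_eqI:
  "(\<And>y. ((\<lambda>t. g (y + t *\<^sub>R axis i 1)) has_real_derivative D y) (at 0)) \<Longrightarrow> partial i g = D"
  unfolding partial_def by (rule ext) (rule DERIV_imp_deriv)

lemma second_difference_mvt:
  fixes g :: "real^'n::finite \<Rightarrow> real"
  assumes "partially_differentiable g i" "partially_differentiable (partial i g) j" "h > 0"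
  obtains \<xi> \<eta> where "0 < \<xi>" "\<xi> < h" "0 < \<eta>" "\<eta> < h"
    "g (x + h *\<^sub>R axis i 1 + h *\<^sub>R axis j 1) - g (x + h *\<^sub>R axis i 1) - g (x + h *\<^sub>R axis j 1) + g x
     = h * h * partial j (partial i g) (x + \<xi> *\<^sub>R axis i 1 + \<eta> *\<^sub>R axis j 1)"
proof -
  define u where "u s = g (x + h *\<^sub>R axis j 1 + s *\<^sub>R axis i 1) - g (x + s *\<^sub>R axis i 1)" for s
  have "DERIV u s :> partial i g (x + h *\<^sub>R axis j 1 + s *\<^sub>R axis i 1) - partial i g (x + s *\<^sub>R axis i 1)" for s
    unfolding u_def by (intro DERIV_diff partially_differentiable_DERIV_at assms(1))
  from MVT2[OF \<open>h > 0\<close> this] obtain \<xi> where "0 < \<xi>" "\<xi> < h" and u_diff: "u h - u 0 =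
      (h - 0) * (partial i g (x + h *\<^sub>R axis j 1 + \<xi> *\<^sub>R axis i 1) - partial i g (x + \<xi> *\<^sub>R axis i 1))"
    by blast
  define w where "w t = partial i g (x + \<xi> *\<^sub>R axis i 1 + t *\<^sub>R axis j 1)" for t
  have "DERIV w t :> partial j (partial i g) (x + \<xi> *\<^sub>R axis i 1 + t *\<^sub>R axis j 1)" for t
    unfolding w_def by (rule partially_differentiable_DERIV_at[OF assms(2)])
  from MVT2[OF \<open>h > 0\<close> this] obtain \<eta> where "0 < \<eta>" "\<eta> < h"
    and w_diff: "w h - w 0 = (h - 0) * partial j (partial i g) (x + \<xi> *\<^sub>R axis i 1 + \<eta> *\<^sub>R axis j 1)"
    by blast
  have "x + h *\<^sub>R axis j 1 + \<xi> *\<^sub>R axis i 1 = x + \<xi> *\<^sub>R axis i 1 + h *\<^sub>R axis j (1::real)"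
    by (simp add: algebra_simps)
  with u_diff have "u h - u 0 = h * (w h - w 0)"
    unfolding w_def by simp
  moreover have "u h - u 0 = g (x + h *\<^sub>R axis i 1 + h *\<^sub>R axis j 1) - g (x + h *\<^sub>R axis i 1)
      - g (x + h *\<^sub>R axis j 1) + g x"
    unfolding u_def by (simp add: algebra_simps)
  ultimately show ?thesis
    using that \<open>0 < \<xi>\<close> \<open>\<xi> < h\<close> \<open>0 < \<eta>\<close> \<open>\<eta> < h\<close> w_diff by (metis mult.assoc diff_zero)
qed

text \<open>Both mixed partials equal the same second difference quotient, at nearby points.\<close>
lemma mixed_partials_meet:
  fixes g :: "real^'n::finite \<Rightarrow> real"
  assumes "partially_differentiable g i" "partially_differentiable (partial i g) j"
    and "partially_differentiable g j" "partially_differentiable (partial j g) i"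
    and "h > 0"
  obtains \<xi> \<eta> \<xi>' \<eta>' where "0 < \<xi>" "\<xi> < h" "0 < \<eta>" "\<eta> < h" "0 < \<xi>'" "\<xi>' < h" "0 < \<eta>'" "\<eta>' < h"
    "partial j (partial i g) (x + \<xi> *\<^sub>R axis i 1 + \<eta> *\<^sub>R axis j 1)
      = partial i (partial j g) (x + \<xi>' *\<^sub>R axis j 1 + \<eta>' *\<^sub>R axis i 1)"
proof -
  obtain \<xi> \<eta> where "0 < \<xi>" "\<xi> < h" "0 < \<eta>" "\<eta> < h" and diff_ij:
    "g (x + h *\<^sub>R axis i 1 + h *\<^sub>R axis j 1) - g (x + h *\<^sub>R axis i 1) - g (x + h *\<^sub>R axis j 1) + g x
     = h * h * partial j (partial i g) (x + \<xi> *\<^sub>R axis i 1 + \<eta> *\<^sub>R axis j 1)"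
    using second_difference_mvt[OF assms(1,2,5)] by blast
  obtain \<xi>' \<eta>' where "0 < \<xi>'" "\<xi>' < h" "0 < \<eta>'" "\<eta>' < h" and diff_ji:
    "g (x + h *\<^sub>R axis j 1 + h *\<^sub>R axis i 1) - g (x + h *\<^sub>R axis j 1) - g (x + h *\<^sub>R axis i 1) + g x
     = h * h * partial i (partial j g) (x + \<xi>' *\<^sub>R axis j 1 + \<eta>' *\<^sub>R axis i 1)"
    using second_difference_mvt[OF assms(3,4,5)] by blast
  have swap: "x + h *\<^sub>R axis j 1 + h *\<^sub>R axis i 1 = x + h *\<^sub>R axis i 1 + h *\<^sub>R axis j (1::real)"
    by (simp add: algebra_simps)
  have "h * h * partial j (partial i g) (x + \<xi> *\<^sub>R axis i 1 + \<eta> *\<^sub>R axis j 1)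
      = h * h * partial i (partial j g) (x + \<xi>' *\<^sub>R axis j 1 + \<eta>' *\<^sub>R axis i 1)"
    using diff_ij diff_ji unfolding swap by linarith
  with \<open>h > 0\<close> show ?thesis
    using that \<open>0 < \<xi>\<close> \<open>\<xi> < h\<close> \<open>0 < \<eta>\<close> \<open>\<eta> < h\<close> \<open>0 < \<xi>'\<close> \<open>\<xi>' < h\<close> \<open>0 < \<eta>'\<close> \<open>\<eta>' < h\<close>
    by simp
qed

lemma partial_commute_Schwarz:
  fixes g :: "real^'n::finite \<Rightarrow> real"
  assumes "partially_differentiable g i" "partially_differentiable (partial i g) j"
    and "partially_differentiable g j" "partially_differentiable (partial j g) i"
    and cont_ij: "continuous_on UNIV (partial j (partial i g))"
    and cont_ji: "continuous_on UNIV (partial i (partial j g))"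
  shows "partial j (partial i g) = partial i (partial j g)"
proof
  fix x
  let ?a = "partial j (partial i g) x" and ?b = "partial i (partial j g) x"
  show "?a = ?b"
  proof (rule ccontr)
    assume "?a \<noteq> ?b"
    define \<epsilon> where "\<epsilon> = \<bar>?a - ?b\<bar> / 2"
    have "\<epsilon> > 0" using \<open>?a \<noteq> ?b\<close> unfolding \<epsilon>_def by simp
    obtain \<delta>1 where "\<delta>1 > 0" and \<delta>1: "\<And>y. dist y x < \<delta>1 \<Longrightarrow> dist (partial j (partial i g) y) ?a < \<epsilon>"
      using cont_ij \<open>\<epsilon> > 0\<close> unfolding continuous_on_iff by blast
    obtain \<delta>2 where "\<delta>2 > 0" and \<delta>2: "\<And>y. dist y x < \<delta>2 \<Longrightarrow> dist (partial i (partial j g) y) ?b < \<epsilon>"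
      using cont_ji \<open>\<epsilon> > 0\<close> unfolding continuous_on_iff by blast
    define h where "h = min \<delta>1 \<delta>2 / 2"
    have "h > 0" using \<open>\<delta>1 > 0\<close> \<open>\<delta>2 > 0\<close> unfolding h_def by simp
    have close: "dist (x + p *\<^sub>R axis k 1 + q *\<^sub>R axis l 1) x < min \<delta>1 \<delta>2"
      if "0 < p" "p < h" "0 < q" "q < h" for p q and k l :: 'n
    proof -
      have "dist (x + p *\<^sub>R axis k 1 + q *\<^sub>R axis l 1) x = norm (p *\<^sub>R axis k (1::real) + q *\<^sub>R axis l 1)"
        by (simp add: dist_norm)
      also have "\<dots> \<le> p + q"
        using norm_triangle_ineq[of "p *\<^sub>R axis k (1::real)" "q *\<^sub>R axis l 1"] that by simp
      finally show ?thesis using that unfolding h_def by simp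
    qed
    obtain \<xi> \<eta> \<xi>' \<eta>' where "0 < \<xi>" "\<xi> < h" "0 < \<eta>" "\<eta> < h" "0 < \<xi>'" "\<xi>' < h" "0 < \<eta>'" "\<eta>' < h"
      and meet: "partial j (partial i g) (x + \<xi> *\<^sub>R axis i 1 + \<eta> *\<^sub>R axis j 1)
        = partial i (partial j g) (x + \<xi>' *\<^sub>R axis j 1 + \<eta>' *\<^sub>R axis i 1)"
      using mixed_partials_meet[OF assms(1-4) \<open>h > 0\<close>] by blast
    have "dist (partial j (partial i g) (x + \<xi> *\<^sub>R axis i 1 + \<eta> *\<^sub>R axis j 1)) ?a < \<epsilon>"
      using \<delta>1 close[OF \<open>0 < \<xi>\<close> \<open>\<xi> < h\<close> \<open>0 < \<eta>\<close> \<open>\<eta> < h\<close>] by simp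
    moreover have "dist (partial i (partial j g) (x + \<xi>' *\<^sub>R axis j 1 + \<eta>' *\<^sub>R axis i 1)) ?b < \<epsilon>"
      using \<delta>2 close[OF \<open>0 < \<xi>'\<close> \<open>\<xi>' < h\<close> \<open>0 < \<eta>'\<close> \<open>\<eta>' < h\<close>] by simp
    ultimately have "\<bar>?a - ?b\<bar> < 2 * \<epsilon>"
      using meet unfolding dist_real_def by linarith
    then show False unfolding \<epsilon>_def by simp
  qed
qed

section \<open>Smooth functions\<close>

lemma pderivs_append: "pderivs (xs @ ys) g = pderivs xs (pderivs ys g)"
  by (induction xs) auto

lemma smooth_pderivs: "smooth g \<Longrightarrow> smooth (pderivs xs g)"
  unfolding smooth_def by (metis pderivs_append)

lemma smooth_partial: "smooth g \<Longrightarrow> smooth (partial i g)"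
  using smooth_pderivs[of g "[i]"] by simp

lemma smooth_imp_partially_differentiable: "smooth g \<Longrightarrow> partially_differentiable g i"
  unfolding smooth_def partially_differentiable_def by (metis pderivs.simps(1))

lemma smooth_imp_continuous: "smooth g \<Longrightarrow> continuous_on UNIV g"
  unfolding smooth_def by (metis pderivs.simps(1))

lemma smooth_partial_commute:
  assumes "smooth g"
  shows "partial j (partial i g) = partial i (partial j g)"
  using assms by (intro partial_commute_Schwarz smooth_imp_partially_differentiable
      smooth_imp_continuous smooth_partial)

lemma pderivs_partial_commute: "smooth g \<Longrightarrow> pderivs xs (partial i g) = partial i (pderivs xs g)"
  by (induction xs) (auto simp: smooth_partial_commute smooth_pderivs)

lemma pderivs_perm:
  "smooth g \<Longrightarrow> mset xs = mset ys \<Longrightarrow> pderivs xs g = pderivs ys g"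
proof (induction xs arbitrary: ys)
  case Nil
  then show ?case by simp
next
  case (Cons i xs)
  then have "i \<in> set ys" by (metis list.set_intros(1) set_mset_mset)
  then obtain ys1 ys2 where ys: "ys = ys1 @ i # ys2" by (meson split_list)
  have "pderivs xs g = pderivs (ys1 @ ys2) g"
    using Cons ys by simp
  moreover have "pderivs ys g = partial i (pderivs (ys1 @ ys2) g)"
    using ys by (simp add: pderivs_append pderivs_partial_commute smooth_pderivs Cons.prems(1))
  ultimately show ?case by simp
qed

lemma pderivs_mset_eq_pderivs: "smooth g \<Longrightarrow> mset xs = M \<Longrightarrow> pderivs_mset M g = pderivs xs g"
  unfolding pderivs_mset_def by (rule pderivs_perm) (auto intro: someI_ex ex_mset)

lemma pderivs_mset_empty [simp]: "pderivs_mset {#} g = g"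
  unfolding pderivs_mset_def by simp

lemma smooth_pderivs_mset: "smooth g \<Longrightarrow> smooth (pderivs_mset M g)"
  unfolding pderivs_mset_def by (rule smooth_pderivs)

lemma pderivs_mset_union:
  assumes "smooth g"
  shows "pderivs_mset (M + N) g = pderivs_mset M (pderivs_mset N g)"
proof -
  obtain xs ys where "mset xs = M" "mset ys = N" using ex_mset by metis
  with assms smooth_pderivs[OF assms] show ?thesis
    by (simp add: pderivs_mset_eq_pderivs[of _ "xs @ ys"] pderivs_mset_eq_pderivs pderivs_append)
qed

lemma pderivs_mset_add_mset:
  "smooth g \<Longrightarrow> pderivs_mset (add_mset i M) g = partial i (pderivs_mset M g)"
  using pderivs_mset_union[of g "{#i#}" M] pderivs_mset_eq_pderivs[of _ "[i]"]
  by (simp add: smooth_pderivs_mset)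

lemma partial_mult:
  "partially_differentiable g i \<Longrightarrow> partially_differentiable h i \<Longrightarrow>
    partial i (\<lambda>x. g x * h x) = (\<lambda>x. partial i g x * h x + g x * partial i h x)"
  by (rule partial_eqI) (auto intro!: derivative_eq_intros partially_differentiable_DERIV)

lemma partial_add:
  "partially_differentiable g i \<Longrightarrow> partially_differentiable h i \<Longrightarrow>
    partial i (\<lambda>x. g x + h x) = (\<lambda>x. partial i g x + partial i h x)"
  by (rule partial_eqI) (auto intro!: derivative_eq_intros partially_differentiable_DERIV)

lemma partial_const: "partial i (\<lambda>x. c) = (\<lambda>x. 0)"
  by (rule partial_eqI) simp

text \<open>Closure of smoothness under products cannot be shown by induction on the list of
  derivatives directly, since differentiating a product yields a sum of products; instead
  this class of functions is shown to be closed under partial derivatives.\<close>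
inductive sum_of_smooth_products :: "(real^'n::finite \<Rightarrow> real) \<Rightarrow> bool" where
  smooth: "smooth g \<Longrightarrow> sum_of_smooth_products g"
| mult: "smooth g \<Longrightarrow> smooth h \<Longrightarrow> sum_of_smooth_products (\<lambda>x. g x * h x)"
| add: "sum_of_smooth_products g \<Longrightarrow> sum_of_smooth_products h \<Longrightarrow>
    sum_of_smooth_products (\<lambda>x. g x + h x)"

lemma sum_of_smooth_products_partial:
  assumes "sum_of_smooth_products g"
  shows "partially_differentiable g i \<and> continuous_on UNIV g
    \<and> sum_of_smooth_products (partial i g)"
  using assms
proof (induction arbitrary: i rule: sum_of_smooth_products.induct)
  case (smooth g)
  then show ?case
    by (simp add: smooth_imp_partially_differentiable smooth_imp_continuous smooth_partial
        sum_of_smooth_products.smooth)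
next
  case (mult g h)
  then have "partially_differentiable g i" "partially_differentiable h i"
    by (simp_all add: smooth_imp_partially_differentiable)
  then have "partially_differentiable (\<lambda>x. g x * h x) i"
    by (intro partially_differentiableI[where D = "\<lambda>y. partial i g y * h y + g y * partial i h y"])
      (auto intro!: derivative_eq_intros partially_differentiable_DERIV)
  moreover have "sum_of_smooth_products (partial i (\<lambda>x. g x * h x))"
    using mult \<open>partially_differentiable g i\<close> \<open>partially_differentiable h i\<close>
    by (simp add: partial_mult smooth_partial sum_of_smooth_products.intros)
  moreover have "continuous_on UNIV (\<lambda>x. g x * h x)"
    using mult by (intro continuous_intros smooth_imp_continuous)
  ultimately show ?case by blast
next
  case (add g h)
  then have "partially_differentiable (\<lambda>x. g x + h x) i"
    by (intro partially_differentiableI[where D = "\<lambda>y. partial i g y + partial i h y"])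
      (auto intro!: derivative_eq_intros partially_differentiable_DERIV)
  with add show ?case
    by (simp add: partial_add continuous_intros sum_of_smooth_products.add)
qed

lemma sum_of_smooth_products_imp_smooth:
  assumes "sum_of_smooth_products g"
  shows "smooth g"
proof -
  have "sum_of_smooth_products (pderivs xs g)" for xs
    using assms by (induction xs) (simp_all add: sum_of_smooth_products_partial)
  then show ?thesis
    unfolding smooth_def using sum_of_smooth_products_partial partially_differentiable_def
    by blast
qed

lemma smooth_mult: "smooth g \<Longrightarrow> smooth h \<Longrightarrow> smooth (\<lambda>x. g x * h x)"
  by (rule sum_of_smooth_products_imp_smooth, rule sum_of_smooth_products.mult)

lemma smooth_add: "smooth g \<Longrightarrow> smooth h \<Longrightarrow> smooth (\<lambda>x. g x + h x)"
  by (metis sum_of_smooth_products_imp_smooth sum_of_smooth_products.add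
      sum_of_smooth_products.smooth)

lemma smooth_const: "smooth (\<lambda>x. c)"
proof -
  have pderivs_const: "pderivs xs (\<lambda>x. c) = (\<lambda>x. if xs = [] then c else 0)" for xs
    by (induction xs) (auto simp: partial_const)
  show ?thesis
    unfolding smooth_def pderivs_const by (auto intro: continuous_intros)
qed

lemma smooth_sum: "(\<And>a. a \<in> A \<Longrightarrow> smooth (g a)) \<Longrightarrow> smooth (\<lambda>x. \<Sum>a\<in>A. g a x)"
  by (induction A rule: infinite_finite_induct) (auto simp: smooth_const smooth_add)

lemma smooth_prod: "(\<And>a. a \<in> A \<Longrightarrow> smooth (g a)) \<Longrightarrow> smooth (\<lambda>x. \<Prod>a\<in>A. g a x)"
  by (induction A rule: infinite_finite_induct) (auto simp: smooth_const smooth_mult)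

lemma partial_sum:
  "(\<And>a. a \<in> A \<Longrightarrow> smooth (g a)) \<Longrightarrow>
    partial i (\<lambda>x. \<Sum>a\<in>A. g a x) = (\<lambda>x. \<Sum>a\<in>A. partial i (g a) x)"
proof (induction A rule: infinite_finite_induct)
  case (insert a A)
  then show ?case
    by (simp add: partial_add smooth_imp_partially_differentiable smooth_sum)
qed (simp_all add: partial_const)

lemma partial_prod:
  "finite A \<Longrightarrow> (\<And>a. a \<in> A \<Longrightarrow> smooth (g a)) \<Longrightarrow>
    partial i (\<lambda>x. \<Prod>a\<in>A. g a x) = (\<lambda>x. \<Sum>b\<in>A. partial i (g b) x * (\<Prod>a\<in>A - {b}. g a x))"
proof (induction A rule: finite_induct)
  case (insert b A)
  have "partial i (\<lambda>x. \<Prod>a\<in>insert b A. g a x) = (\<lambda>x. partial i (g b) x * (\<Prod>a\<in>A. g a x)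
      + g b x * (\<Sum>c\<in>A. partial i (g c) x * (\<Prod>a\<in>A - {c}. g a x)))"
    using insert by (simp add: partial_mult smooth_imp_partially_differentiable smooth_prod)
  also have "\<dots> = (\<lambda>x. \<Sum>c\<in>insert b A. partial i (g c) x * (\<Prod>a\<in>insert b A - {c}. g a x))"
  proof
    fix x
    have "insert b A - {c} = insert b (A - {c})" if "c \<in> A" for c
      using that insert.hyps(2) by blast
    then have "(\<Prod>a\<in>insert b A - {c}. g a x) = g b x * (\<Prod>a\<in>A - {c}. g a x)" if "c \<in> A" for c
      using that insert.hyps by simp
    then show "partial i (g b) x * (\<Prod>a\<in>A. g a x)
        + g b x * (\<Sum>c\<in>A. partial i (g c) x * (\<Prod>a\<in>A - {c}. g a x))
      = (\<Sum>c\<in>insert b A. partial i (g c) x * (\<Prod>a\<in>insert b A - {c}. g a x))"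
      using insert.hyps by (simp add: sum_distrib_left mult.left_commute)
  qed
  finally show ?case .
qed (simp add: partial_const)

lemma pderivs_mset_sum:
  "(\<And>a. a \<in> A \<Longrightarrow> smooth (g a)) \<Longrightarrow>
    pderivs_mset M (\<lambda>x. \<Sum>a\<in>A. g a x) = (\<lambda>x. \<Sum>a\<in>A. pderivs_mset M (g a) x)"
  by (induction M)
    (simp_all add: pderivs_mset_add_mset smooth_sum smooth_pderivs_mset partial_sum)

section \<open>The Leibniz rule for multiset derivatives of products\<close>

lemma sum_PiE_insert:
  assumes "a \<notin> E"
  shows "(\<Sum>\<sigma>\<in>insert a E \<rightarrow>\<^sub>E V. F \<sigma>) = (\<Sum>\<sigma>\<in>E \<rightarrow>\<^sub>E V. \<Sum>u\<in>V. F (\<sigma>(a := u)))"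
proof -
  have "(\<Sum>\<sigma>\<in>insert a E \<rightarrow>\<^sub>E V. F \<sigma>) = (\<Sum>(u, \<sigma>)\<in>V \<times> (E \<rightarrow>\<^sub>E V). F (\<sigma>(a := u)))"
    unfolding PiE_insert_eq using inj_combinator[OF assms, of "\<lambda>_. V"]
    by (simp add: sum.reindex split_def)
  also have "\<dots> = (\<Sum>\<sigma>\<in>E \<rightarrow>\<^sub>E V. \<Sum>u\<in>V. F (\<sigma>(a := u)))"
    by (simp add: sum.cartesian_product[symmetric] sum.swap[of _ V])
  finally show ?thesis .
qed

lemma pderivs_mset_prod:
  fixes c :: "'e \<Rightarrow> 'n::finite" and g :: "'v \<Rightarrow> real^'n \<Rightarrow> real"
  assumes "finite E" "finite V" and smooth: "\<And>v. v \<in> V \<Longrightarrow> smooth (g v)"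
  shows "pderivs_mset (image_mset c (mset_set E)) (\<lambda>x. \<Prod>v\<in>V. pderivs_mset (D v) (g v) x) =
    (\<lambda>x. \<Sum>\<sigma>\<in>E \<rightarrow>\<^sub>E V. \<Prod>v\<in>V. pderivs_mset (D v + image_mset c (mset_set {e\<in>E. \<sigma> e = v})) (g v) x)"
  using \<open>finite E\<close>
proof (induction E rule: finite_induct)
  case (insert a E)
  define H where "H \<sigma> v = pderivs_mset (D v + image_mset c (mset_set {e\<in>E. \<sigma> e = v})) (g v)" for \<sigma> v
  have smooth_H: "smooth (H \<sigma> v)" if "v \<in> V" for \<sigma> v
    unfolding H_def using smooth[OF that] by (rule smooth_pderivs_mset)
  have split: "(\<Prod>v\<in>V. pderivs_mset (D v + image_mset c (mset_set {e\<in>insert a E. (\<sigma>(a := u)) e = v})) (g v) x)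
      = partial (c a) (H \<sigma> u) x * (\<Prod>v\<in>V - {u}. H \<sigma> v x)" if "u \<in> V" for \<sigma> u x
  proof -
    have "{e\<in>insert a E. (\<sigma>(a := u)) e = v} = (if v = u then insert a {e\<in>E. \<sigma> e = v} else {e\<in>E. \<sigma> e = v})" for v
      using insert.hyps(2) by auto
    then show ?thesis
      using that \<open>finite V\<close> insert.hyps(1,2) smooth
      by (simp add: prod.remove H_def pderivs_mset_add_mset)
  qed
  have "pderivs_mset (image_mset c (mset_set (insert a E))) (\<lambda>x. \<Prod>v\<in>V. pderivs_mset (D v) (g v) x)
      = partial (c a) (\<lambda>x. \<Sum>\<sigma>\<in>E \<rightarrow>\<^sub>E V. \<Prod>v\<in>V. H \<sigma> v x)"
    using insert smooth by (simp add: H_def pderivs_mset_add_mset smooth_prod smooth_pderivs_mset)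
  also have "\<dots> = (\<lambda>x. \<Sum>\<sigma>\<in>E \<rightarrow>\<^sub>E V. \<Sum>u\<in>V. partial (c a) (H \<sigma> u) x * (\<Prod>v\<in>V - {u}. H \<sigma> v x))"
    using smooth_H \<open>finite V\<close> by (simp add: partial_sum partial_prod smooth_prod)
  also have "\<dots> = (\<lambda>x. \<Sum>\<sigma>\<in>insert a E \<rightarrow>\<^sub>E V.
      \<Prod>v\<in>V. pderivs_mset (D v + image_mset c (mset_set {e\<in>insert a E. \<sigma> e = v})) (g v) x)"
    unfolding sum_PiE_insert[OF insert.hyps(2)] by (intro ext sum.cong refl) (simp only: split)
  finally show ?case .
qed simp

lemma pderivs_mset_plus_prod:
  fixes c1 :: "'p \<Rightarrow> 'n::finite" and c2 :: "'q \<Rightarrow> 'n" and g :: "'v \<Rightarrow> real^'n \<Rightarrow> real"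
  assumes "finite P" "finite Q" "finite V" and smooth: "\<And>v. v \<in> V \<Longrightarrow> smooth (g v)"
  shows "pderivs_mset (image_mset c1 (mset_set P) + image_mset c2 (mset_set Q))
      (\<lambda>x. \<Prod>v\<in>V. pderivs_mset (D v) (g v) x) =
    (\<lambda>x. \<Sum>\<phi>\<in>P \<rightarrow>\<^sub>E V. \<Sum>\<psi>\<in>Q \<rightarrow>\<^sub>E V. \<Prod>v\<in>V. pderivs_mset (D v
      + image_mset c1 (mset_set {p\<in>P. \<phi> p = v}) + image_mset c2 (mset_set {q\<in>Q. \<psi> q = v})) (g v) x)"
proof -
  have "pderivs_mset (image_mset c1 (mset_set P) + image_mset c2 (mset_set Q))
      (\<lambda>x. \<Prod>v\<in>V. pderivs_mset (D v) (g v) x)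
    = pderivs_mset (image_mset c1 (mset_set P)) (\<lambda>x. \<Sum>\<psi>\<in>Q \<rightarrow>\<^sub>E V.
        \<Prod>v\<in>V. pderivs_mset (D v + image_mset c2 (mset_set {q\<in>Q. \<psi> q = v})) (g v) x)"
    using assms by (simp add: pderivs_mset_union pderivs_mset_prod smooth_prod smooth_pderivs_mset)
  also have "\<dots> = (\<lambda>x. \<Sum>\<psi>\<in>Q \<rightarrow>\<^sub>E V. pderivs_mset (image_mset c1 (mset_set P)) (\<lambda>x.
        \<Prod>v\<in>V. pderivs_mset (D v + image_mset c2 (mset_set {q\<in>Q. \<psi> q = v})) (g v) x) x)"
    using smooth by (intro pderivs_mset_sum smooth_prod smooth_pderivs_mset)
  also have "\<dots> = (\<lambda>x. \<Sum>\<psi>\<in>Q \<rightarrow>\<^sub>E V. \<Sum>\<phi>\<in>P \<rightarrow>\<^sub>E V. \<Prod>v\<in>V. pderivs_mset (D v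
      + image_mset c2 (mset_set {q\<in>Q. \<psi> q = v}) + image_mset c1 (mset_set {p\<in>P. \<phi> p = v})) (g v) x)"
    using assms by (simp add: pderivs_mset_prod)
  also have "\<dots> = (\<lambda>x. \<Sum>\<phi>\<in>P \<rightarrow>\<^sub>E V. \<Sum>\<psi>\<in>Q \<rightarrow>\<^sub>E V. \<Prod>v\<in>V. pderivs_mset (D v
      + image_mset c1 (mset_set {p\<in>P. \<phi> p = v}) + image_mset c2 (mset_set {q\<in>Q. \<psi> q = v})) (g v) x)"
    by (subst sum.swap) (simp add: add_ac)
  finally show ?thesis .
qed

section \<open>Elementary differentials of grafted forests\<close>

lemma sum_PiE_Inl_Inr:
  "(\<Sum>I\<in>(Inl ` A \<union> Inr ` B) \<rightarrow>\<^sub>E X. F I) = (\<Sum>I1\<in>A \<rightarrow>\<^sub>E X. \<Sum>I2\<in>B \<rightarrow>\<^sub>E X. F (case_sum I1 I2))"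
proof -
  have "bij_betw (\<lambda>(I1, I2). case_sum I1 I2) ((A \<rightarrow>\<^sub>E X) \<times> (B \<rightarrow>\<^sub>E X)) ((Inl ` A \<union> Inr ` B) \<rightarrow>\<^sub>E X)"
  proof (rule bij_betw_byWitness[where f' = "\<lambda>I. (I \<circ> Inl, I \<circ> Inr)"])
    show "(\<lambda>(I1, I2). case_sum I1 I2) ` ((A \<rightarrow>\<^sub>E X) \<times> (B \<rightarrow>\<^sub>E X)) \<subseteq> (Inl ` A \<union> Inr ` B) \<rightarrow>\<^sub>E X"
      by (auto simp: PiE_def extensional_def image_iff split: sum.splits) blast+
  qed (auto simp: PiE_def extensional_def intro!: ext split: sum.splits)
  then show ?thesis
    by (simp add: sum.reindex_bij_betw[symmetric] sum.cartesian_product split_def)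
qed

lemma prod_Inl_Inr:
  "finite A \<Longrightarrow> finite B \<Longrightarrow> (\<Prod>u\<in>Inl ` A \<union> Inr ` B. h u) = (\<Prod>a\<in>A. h (Inl a)) * (\<Prod>b\<in>B. h (Inr b))"
  by (subst prod.union_disjoint) (auto simp: prod.reindex)

lemma image_mset_mset_set_image:
  "inj h \<Longrightarrow> image_mset g (mset_set (h ` A)) = image_mset (g \<circ> h) (mset_set A)"
  by (simp add: image_mset_mset_set[symmetric] multiset.map_comp inj_on_subset)

lemma wf_eaf_finite:
  assumes "wf_eaf \<gamma>"
  shows "finite (nodes \<gamma>)" "finite (nonroot \<gamma>)" "finite (lianas \<gamma>)"
    "finite (preds \<gamma> v)" "finite (ends_at \<gamma> v)"
  using assms unfolding wf_eaf_def nonroot_def preds_def ends_at_def liana_ends_def by auto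

lemma elem_diff_eq_prod_nodes:
  assumes "root \<gamma> \<in> nodes \<gamma>" "finite (nodes \<gamma>)"
  shows "elem_diff f \<gamma> \<phi> x = (\<Sum>I\<in>nonroot \<gamma> \<rightarrow>\<^sub>E UNIV. \<Sum>J\<in>lianas \<gamma> \<rightarrow>\<^sub>E UNIV.
    \<Prod>v\<in>nodes \<gamma>. pderivs_mset (deriv_idx \<gamma> I J v) (if v = root \<gamma> then \<phi> else (\<lambda>y. f y $ I v)) x)"
  using assms unfolding elem_diff_def nonroot_def
  by (simp add: prod.remove[OF assms(2,1)] mult.commute cong: prod.cong_simp)

lemma
  shows nodes_graft: "nodes (graft \<gamma>1 \<gamma>2 \<phi> \<psi>) = Inl ` nodes \<gamma>1 \<union> Inr ` nonroot \<gamma>2"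
    and root_graft: "root (graft \<gamma>1 \<gamma>2 \<phi> \<psi>) = Inl (root \<gamma>1)"
    and nonroot_graft: "nonroot (graft \<gamma>1 \<gamma>2 \<phi> \<psi>) = Inl ` nonroot \<gamma>1 \<union> Inr ` nonroot \<gamma>2"
    and lianas_graft: "lianas (graft \<gamma>1 \<gamma>2 \<phi> \<psi>) = Inl ` lianas \<gamma>1 \<union> Inr ` lianas \<gamma>2"
  unfolding graft_def nonroot_def by auto

lemma deriv_idx_graft_Inr:
  assumes "v \<noteq> root \<gamma>2"
  shows "deriv_idx (graft \<gamma>1 \<gamma>2 \<phi> \<psi>) (case_sum I1 I2) (case_sum J1 J2) (Inr v) = deriv_idx \<gamma>2 I2 J2 v"
proof -
  have "preds (graft \<gamma>1 \<gamma>2 \<phi> \<psi>) (Inr v) = Inr ` preds \<gamma>2 v"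
    using assms unfolding preds_def nonroot_graft by (auto simp: graft_def nonroot_def split: if_splits)
  moreover have "ends_at (graft \<gamma>1 \<gamma>2 \<phi> \<psi>) (Inr v) = apfst Inr ` ends_at \<gamma>2 v"
    using assms unfolding ends_at_def liana_ends_def lianas_graft
    by (auto simp: graft_def image_iff apfst_def map_prod_def split: sum.splits if_splits)
  ultimately show ?thesis
    unfolding deriv_idx_def
    by (simp add: image_mset_mset_set_image comp_def)
qed

lemma deriv_idx_graft_Inl:
  assumes "wf_eaf \<gamma>1" "wf_eaf \<gamma>2"
  shows "deriv_idx (graft \<gamma>1 \<gamma>2 \<phi> \<psi>) (case_sum I1 I2) (case_sum J1 J2) (Inl v) =
     deriv_idx \<gamma>1 I1 J1 v + image_mset I2 (mset_set {w \<in> preds \<gamma>2 (root \<gamma>2). \<phi> w = v})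
      + image_mset (\<lambda>e. J2 (fst e)) (mset_set {e \<in> ends_at \<gamma>2 (root \<gamma>2). \<psi> e = v})"
proof -
  have preds_eq: "preds (graft \<gamma>1 \<gamma>2 \<phi> \<psi>) (Inl v) = Inl ` preds \<gamma>1 v \<union> Inr ` {w \<in> preds \<gamma>2 (root \<gamma>2). \<phi> w = v}"
    unfolding preds_def nonroot_graft by (auto simp: graft_def nonroot_def split: if_splits)
  have ends_eq: "ends_at (graft \<gamma>1 \<gamma>2 \<phi> \<psi>) (Inl v) =
      apfst Inl ` ends_at \<gamma>1 v \<union> apfst Inr ` {e \<in> ends_at \<gamma>2 (root \<gamma>2). \<psi> e = v}"
    unfolding ends_at_def liana_ends_def lianas_graft
    by (auto simp: graft_def image_iff apfst_def map_prod_def split: sum.splits if_splits)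
  have "finite (preds \<gamma>1 v)" "finite {w \<in> preds \<gamma>2 (root \<gamma>2). \<phi> w = v}"
    "finite (ends_at \<gamma>1 v)" "finite {e \<in> ends_at \<gamma>2 (root \<gamma>2). \<psi> e = v}"
    using wf_eaf_finite[OF assms(1)] wf_eaf_finite[OF assms(2)] by auto
  then show ?thesis
    unfolding deriv_idx_def preds_eq ends_eq
    by (subst (1 2) mset_set_Union) (auto simp: image_mset_mset_set_image comp_def add_ac)
qed

lemma elem_diff_graft:
  assumes "wf_eaf \<gamma>1" "wf_eaf \<gamma>2"
  shows "elem_diff f (graft \<gamma>1 \<gamma>2 \<phi>' \<psi>) \<phi> x =
    (\<Sum>I1\<in>nonroot \<gamma>1 \<rightarrow>\<^sub>E UNIV. \<Sum>I2\<in>nonroot \<gamma>2 \<rightarrow>\<^sub>E UNIV.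
     \<Sum>J1\<in>lianas \<gamma>1 \<rightarrow>\<^sub>E UNIV. \<Sum>J2\<in>lianas \<gamma>2 \<rightarrow>\<^sub>E UNIV.
       (\<Prod>v\<in>nonroot \<gamma>2. pderivs_mset (deriv_idx \<gamma>2 I2 J2 v) (\<lambda>y. f y $ I2 v) x) *
       (\<Prod>v\<in>nodes \<gamma>1. pderivs_mset (deriv_idx (graft \<gamma>1 \<gamma>2 \<phi>' \<psi>) (case_sum I1 I2) (case_sum J1 J2) (Inl v))
          (if v = root \<gamma>1 then \<phi> else (\<lambda>y. f y $ I1 v)) x))"
  (is "_ = ?rhs")
proof -
  let ?G = "graft \<gamma>1 \<gamma>2 \<phi>' \<psi>"
  let ?F = "\<lambda>I J u. pderivs_mset (deriv_idx ?G I J u) (if u = root ?G then \<phi> else (\<lambda>y. f y $ I u)) x"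
  have "root ?G \<in> nodes ?G" "finite (nodes ?G)"
    using assms unfolding nodes_graft root_graft wf_eaf_def nonroot_def by auto
  then have "elem_diff f ?G \<phi> x = (\<Sum>I\<in>nonroot ?G \<rightarrow>\<^sub>E UNIV. \<Sum>J\<in>lianas ?G \<rightarrow>\<^sub>E UNIV. \<Prod>u\<in>nodes ?G. ?F I J u)"
    by (rule elem_diff_eq_prod_nodes)
  also have "\<dots> = (\<Sum>I1\<in>nonroot \<gamma>1 \<rightarrow>\<^sub>E UNIV. \<Sum>I2\<in>nonroot \<gamma>2 \<rightarrow>\<^sub>E UNIV.
      \<Sum>J1\<in>lianas \<gamma>1 \<rightarrow>\<^sub>E UNIV. \<Sum>J2\<in>lianas \<gamma>2 \<rightarrow>\<^sub>E UNIV.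
        \<Prod>u\<in>Inl ` nodes \<gamma>1 \<union> Inr ` nonroot \<gamma>2. ?F (case_sum I1 I2) (case_sum J1 J2) u)"
    by (simp only: nonroot_graft lianas_graft nodes_graft sum_PiE_Inl_Inr)
  also have "\<dots> = ?rhs"
    using wf_eaf_finite[OF assms(1)] wf_eaf_finite[OF assms(2)]
    by (simp add: prod_Inl_Inr root_graft mult.commute deriv_idx_graft_Inr nonroot_def
        cong: prod.cong_simp if_cong)
  finally show ?thesis .
qed

lemma pderivs_root_elem_diff:
  assumes "\<And>i. smooth (\<lambda>x. f x $ i)" "smooth \<phi>" "wf_eaf \<gamma>1" "wf_eaf \<gamma>2"
  shows "pderivs_mset (deriv_idx \<gamma>2 I2 J2 (root \<gamma>2)) (elem_diff f \<gamma>1 \<phi>) x =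
    (\<Sum>I1\<in>nonroot \<gamma>1 \<rightarrow>\<^sub>E UNIV. \<Sum>J1\<in>lianas \<gamma>1 \<rightarrow>\<^sub>E UNIV.
     \<Sum>\<phi>'\<in>preds \<gamma>2 (root \<gamma>2) \<rightarrow>\<^sub>E nodes \<gamma>1. \<Sum>\<psi>\<in>ends_at \<gamma>2 (root \<gamma>2) \<rightarrow>\<^sub>E nodes \<gamma>1.
       \<Prod>v\<in>nodes \<gamma>1. pderivs_mset (deriv_idx (graft \<gamma>1 \<gamma>2 \<phi>' \<psi>) (case_sum I1 I2) (case_sum J1 J2) (Inl v))
          (if v = root \<gamma>1 then \<phi> else (\<lambda>y. f y $ I1 v)) x)"
  (is "_ = ?rhs")
proof -
  let ?g = "\<lambda>I1 v. if v = root \<gamma>1 then \<phi> else (\<lambda>y. f y $ I1 v)"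
  have smooth_g: "smooth (?g I1 v)" for I1 v
    using assms by simp
  have "elem_diff f \<gamma>1 \<phi> = (\<lambda>x. \<Sum>I1\<in>nonroot \<gamma>1 \<rightarrow>\<^sub>E UNIV. \<Sum>J1\<in>lianas \<gamma>1 \<rightarrow>\<^sub>E UNIV.
      \<Prod>v\<in>nodes \<gamma>1. pderivs_mset (deriv_idx \<gamma>1 I1 J1 v) (?g I1 v) x)"
    using assms(3) by (intro ext elem_diff_eq_prod_nodes) (auto simp: wf_eaf_def)
  then have "pderivs_mset (deriv_idx \<gamma>2 I2 J2 (root \<gamma>2)) (elem_diff f \<gamma>1 \<phi>) x =
      (\<Sum>I1\<in>nonroot \<gamma>1 \<rightarrow>\<^sub>E UNIV. \<Sum>J1\<in>lianas \<gamma>1 \<rightarrow>\<^sub>E UNIV. pderivs_mset (deriv_idx \<gamma>2 I2 J2 (root \<gamma>2))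
        (\<lambda>x. \<Prod>v\<in>nodes \<gamma>1. pderivs_mset (deriv_idx \<gamma>1 I1 J1 v) (?g I1 v) x) x)"
    by (simp add: pderivs_mset_sum smooth_sum smooth_prod smooth_pderivs_mset smooth_g)
  also have "\<dots> = ?rhs"
    using wf_eaf_finite[OF assms(3)] wf_eaf_finite[OF assms(4)] unfolding deriv_idx_def[of \<gamma>2]
    by (simp add: pderivs_mset_plus_prod smooth_g deriv_idx_graft_Inl[OF assms(3,4)])
  finally show ?thesis .
qed

theorem mainTheorem1:
  fixes f :: "real^'n::finite \<Rightarrow> real^'n"
    and \<phi> :: "real^'n \<Rightarrow> real"
    and \<gamma>1 :: "('v, 'l1) eaf" and \<gamma>2 :: "('w, 'l2) eaf"
  assumes "\<And>i. smooth (\<lambda>x. f x $ i)"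
    and "smooth \<phi>"
    and "wf_eaf \<gamma>1" and "wf_eaf \<gamma>2"
  shows "elem_diff f \<gamma>2 (elem_diff f \<gamma>1 \<phi>) =
    (\<lambda>x. \<Sum>\<phi>' \<in> preds \<gamma>2 (root \<gamma>2) \<rightarrow>\<^sub>E nodes \<gamma>1.
          \<Sum>\<psi> \<in> ends_at \<gamma>2 (root \<gamma>2) \<rightarrow>\<^sub>E nodes \<gamma>1.
            elem_diff f (graft \<gamma>1 \<gamma>2 \<phi>' \<psi>) \<phi> x)"
proof
  fix x
  let ?SI1 = "nonroot \<gamma>1 \<rightarrow>\<^sub>E (UNIV :: 'n set)" and ?SJ1 = "lianas \<gamma>1 \<rightarrow>\<^sub>E (UNIV :: 'n set)"
  let ?SI2 = "nonroot \<gamma>2 \<rightarrow>\<^sub>E (UNIV :: 'n set)" and ?SJ2 = "lianas \<gamma>2 \<rightarrow>\<^sub>E (UNIV :: 'n set)"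
  let ?S\<phi> = "preds \<gamma>2 (root \<gamma>2) \<rightarrow>\<^sub>E nodes \<gamma>1" and ?S\<psi> = "ends_at \<gamma>2 (root \<gamma>2) \<rightarrow>\<^sub>E nodes \<gamma>1"
  let ?A = "\<lambda>I2 J2. \<Prod>v\<in>nonroot \<gamma>2. pderivs_mset (deriv_idx \<gamma>2 I2 J2 v) (\<lambda>y. f y $ I2 v) x"
  let ?B = "\<lambda>I1 I2 J1 J2 \<phi>' \<psi>. \<Prod>v\<in>nodes \<gamma>1. pderivs_mset (deriv_idx (graft \<gamma>1 \<gamma>2 \<phi>' \<psi>)
      (case_sum I1 I2) (case_sum J1 J2) (Inl v)) (if v = root \<gamma>1 then \<phi> else (\<lambda>y. f y $ I1 v)) x"
  have "elem_diff f \<gamma>2 (elem_diff f \<gamma>1 \<phi>) x = (\<Sum>I2\<in>?SI2. \<Sum>J2\<in>?SJ2.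
      ?A I2 J2 * pderivs_mset (deriv_idx \<gamma>2 I2 J2 (root \<gamma>2)) (elem_diff f \<gamma>1 \<phi>) x)"
    unfolding elem_diff_def[of f \<gamma>2] ..
  also have "\<dots> = (\<Sum>I2\<in>?SI2. \<Sum>J2\<in>?SJ2. \<Sum>I1\<in>?SI1. \<Sum>J1\<in>?SJ1. \<Sum>\<phi>'\<in>?S\<phi>. \<Sum>\<psi>\<in>?S\<psi>.
      ?A I2 J2 * ?B I1 I2 J1 J2 \<phi>' \<psi>)"
    by (simp only: pderivs_root_elem_diff assms sum_distrib_left)
  also have "\<dots> = (\<Sum>\<phi>'\<in>?S\<phi>. \<Sum>\<psi>\<in>?S\<psi>. \<Sum>I1\<in>?SI1. \<Sum>I2\<in>?SI2. \<Sum>J1\<in>?SJ1. \<Sum>J2\<in>?SJ2.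
      ?A I2 J2 * ?B I1 I2 J1 J2 \<phi>' \<psi>)"
    by (simp only: sum.swap[of _ ?SI2 ?S\<phi>] sum.swap[of _ ?SI2 ?S\<psi>] sum.swap[of _ ?SI2 ?SI1]
        sum.swap[of _ ?SJ2 ?S\<phi>] sum.swap[of _ ?SJ2 ?S\<psi>] sum.swap[of _ ?SJ2 ?SI1] sum.swap[of _ ?SJ2 ?SJ1]
        sum.swap[of _ ?SI1 ?S\<phi>] sum.swap[of _ ?SI1 ?S\<psi>] sum.swap[of _ ?SJ1 ?S\<phi>] sum.swap[of _ ?SJ1 ?S\<psi>])
  also have "\<dots> = (\<Sum>\<phi>'\<in>?S\<phi>. \<Sum>\<psi>\<in>?S\<psi>. elem_diff f (graft \<gamma>1 \<gamma>2 \<phi>' \<psi>) \<phi> x)"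
    by (simp only: elem_diff_graft assms)
  finally show "elem_diff f \<gamma>2 (elem_diff f \<gamma>1 \<phi>) x = \<dots>" .
qed

end
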